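(* Let $G$ and $H$ be graphs with $\chi_v(G)=\chi_v(H)=t$, and assume every optimal vector coloring of $G$ is injective. Then: (i) every homomorphism $G\to H$ is injective; (ii) if additionally every optimal vector coloring $g\mapsto p_g$ of $G$ satisfies, for all $g,g'\in V(G)$, $\langle p_g,p_{g'}\rangle\le-\frac{1}{t-1}$ if and only if $g\sim_G g'$, then every homomorphism $G\to H$ is an isomorphism from $G$ onto an induced subgraph of $H$.
   Context: A vector $t$-coloring of a graph ($t\ge2$) assigns unit vectors in some $\mathbb{R}^d$ to the vertices so that $\langle p_i,p_j\rangle\le-1/(t-1)$ whenever $i\sim j$. $\chi_v$ is the least $t\ge2$ admitting a vector $t$-coloring; an optimal vector coloring is a vector $\chi_v$-coloring. A vector coloring is injective if distinct vertices receive distinct vectors. A homomorphism is an adjacency-preserving map between vertex sets. *)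

theory Defs
  imports Main Complex_Main
begin

definition graph :: "'a set \<Rightarrow> ('a \<Rightarrow> 'a \<Rightarrow> bool) \<Rightarrow> bool" where
  "graph V E \<longleftrightarrow> finite V \<and> (\<forall>u v. E u v \<longrightarrow> u \<in> V \<and> v \<in> V)
     \<and> (\<forall>u v. E u v \<longrightarrow> E v u) \<and> (\<forall>v. \<not> E v v)"

text \<open>Vectors of R^d are represented as functions nat => real that vanish at
indices >= d; the inner product is the sum over i < d.\<close>
definition inner_d :: "nat \<Rightarrow> (nat \<Rightarrow> real) \<Rightarrow> (nat \<Rightarrow> real) \<Rightarrow> real" where
  "inner_d d x y = (\<Sum>i<d. x i * y i)"

definition vector_coloring ::
  "'a set \<Rightarrow> ('a \<Rightarrow> 'a \<Rightarrow> bool) \<Rightarrow> real \<Rightarrow> nat \<Rightarrow> ('a \<Rightarrow> nat \<Rightarrow> real) \<Rightarrow> bool" where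
  "vector_coloring V E t d p \<longleftrightarrow> t \<ge> 2
     \<and> (\<forall>v\<in>V. \<forall>i\<ge>d. p v i = 0)
     \<and> (\<forall>v\<in>V. inner_d d (p v) (p v) = 1)
     \<and> (\<forall>u\<in>V. \<forall>v\<in>V. E u v \<longrightarrow> inner_d d (p u) (p v) \<le> - 1 / (t - 1))"

definition chi_v :: "'a set \<Rightarrow> ('a \<Rightarrow> 'a \<Rightarrow> bool) \<Rightarrow> real" where
  "chi_v V E = Inf {t. \<exists>d p. vector_coloring V E t d p}"

definition optimal_vector_coloring ::
  "'a set \<Rightarrow> ('a \<Rightarrow> 'a \<Rightarrow> bool) \<Rightarrow> nat \<Rightarrow> ('a \<Rightarrow> nat \<Rightarrow> real) \<Rightarrow> bool" where
  "optimal_vector_coloring V E d p \<longleftrightarrow> vector_coloring V E (chi_v V E) d p"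

definition graph_hom ::
  "'a set \<Rightarrow> ('a \<Rightarrow> 'a \<Rightarrow> bool) \<Rightarrow> 'b set \<Rightarrow> ('b \<Rightarrow> 'b \<Rightarrow> bool) \<Rightarrow> ('a \<Rightarrow> 'b) \<Rightarrow> bool" where
  "graph_hom VG EG VH EH f \<longleftrightarrow> (\<forall>v\<in>VG. f v \<in> VH)
     \<and> (\<forall>u\<in>VG. \<forall>v\<in>VG. EG u v \<longrightarrow> EH (f u) (f v))"

definition induced_embedding ::
  "'a set \<Rightarrow> ('a \<Rightarrow> 'a \<Rightarrow> bool) \<Rightarrow> 'b set \<Rightarrow> ('b \<Rightarrow> 'b \<Rightarrow> bool) \<Rightarrow> ('a \<Rightarrow> 'b) \<Rightarrow> bool" where
  "induced_embedding VG EG VH EH f \<longleftrightarrow> (\<forall>v\<in>VG. f v \<in> VH) \<and> inj_on f VG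
     \<and> (\<forall>u\<in>VG. \<forall>v\<in>VG. EG u v \<longleftrightarrow> EH (f u) (f v))"

end

theory Submission
  imports Defs "HOL-Analysis.Analysis"
begin

text \<open>The vector chromatic number of H is attained: the set of admissible t is
closed, because by Gram--Schmidt every vector coloring can be moved isometrically into
dimension |V(H)|, where the unit vectors form a compact set. Composing an optimal
vector coloring q of H with a homomorphism f gives a vector t-coloring of G, hence an
optimal one; its injectivity forces f to be injective, and if its inner products detect
the edges of G then every edge f(g) f(g') of H, having inner product at most -1/(t-1),
comes from an edge g g' of G.\<close>

lemma inner_d_commute: "inner_d d x y = inner_d d y x"
  unfolding inner_d_def by (simp add: mult.commute)

lemma inner_d_self_nonneg: "inner_d d x x \<ge> 0"
  unfolding inner_d_def by (simp add: sum_nonneg)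

lemma inner_d_self_eq_0_imp_eq_0: "inner_d d x x = 0 \<Longrightarrow> i < d \<Longrightarrow> x i = 0"
  unfolding inner_d_def using sum_nonneg_eq_0_iff[of "{..<d}" "\<lambda>i. x i * x i"] by simp

lemma inner_d_diff_left: "inner_d d (\<lambda>i. x i - y i) z = inner_d d x z - inner_d d y z"
  unfolding inner_d_def by (simp add: left_diff_distrib sum_subtractf)

lemma inner_d_add_left: "inner_d d (\<lambda>i. x i + y i) z = inner_d d x z + inner_d d y z"
  unfolding inner_d_def by (simp add: distrib_right sum.distrib)

lemma inner_d_divide_left: "inner_d d (\<lambda>i. x i / c) y = inner_d d x y / c"
  unfolding inner_d_def by (simp add: sum_divide_distrib)

lemma inner_d_divide_right: "inner_d d x (\<lambda>i. y i / c) = inner_d d x y / c"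
  unfolding inner_d_def by (simp add: sum_divide_distrib)

lemma inner_d_sum_right:
  assumes "\<forall>i<d. y i = (\<Sum>j<k. a j * e j i)"
  shows "inner_d d z y = (\<Sum>j<k. a j * inner_d d z (e j))"
proof -
  have "inner_d d z y = (\<Sum>i<d. \<Sum>j<k. a j * (z i * e j i))"
    unfolding inner_d_def using assms by (intro sum.cong) (auto simp: sum_distrib_left algebra_simps)
  also have "\<dots> = (\<Sum>j<k. a j * inner_d d z (e j))"
    unfolding inner_d_def by (subst sum.swap) (simp add: sum_distrib_left)
  finally show ?thesis .
qed

lemma inner_d_mono_neutral:
  assumes "k \<le> n" "\<forall>i\<ge>k. x i = 0"
  shows "inner_d n x y = inner_d k x y"
  unfolding inner_d_def
  using sum.mono_neutral_right[of "{..<n}" "{..<k}" "\<lambda>i. x i * y i"] assms by auto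

definition orthonormal_d :: "nat \<Rightarrow> nat \<Rightarrow> (nat \<Rightarrow> nat \<Rightarrow> real) \<Rightarrow> bool" where
  "orthonormal_d d k e \<longleftrightarrow> (\<forall>j<k. \<forall>j'<k. inner_d d (e j) (e j') = (if j = j' then 1 else 0))"

definition fourier_expansion_d :: "nat \<Rightarrow> nat \<Rightarrow> (nat \<Rightarrow> nat \<Rightarrow> real) \<Rightarrow> (nat \<Rightarrow> real) \<Rightarrow> bool" where
  "fourier_expansion_d d k e x \<longleftrightarrow> (\<forall>i<d. x i = (\<Sum>j<k. inner_d d x (e j) * e j i))"

lemma inner_d_fourier_expansion:
  "fourier_expansion_d d k e x \<Longrightarrow> inner_d d y x = (\<Sum>j<k. inner_d d x (e j) * inner_d d y (e j))"
  unfolding fourier_expansion_d_def by (rule inner_d_sum_right)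

lemma orthonormal_d_residual_orthogonal:
  assumes "orthonormal_d d k e" "j < k"
  shows "inner_d d (\<lambda>i. x i - (\<Sum>l<k. inner_d d x (e l) * e l i)) (e j) = 0"
proof -
  have "inner_d d (e j) (\<lambda>i. \<Sum>l<k. inner_d d x (e l) * e l i)
      = (\<Sum>l<k. inner_d d x (e l) * inner_d d (e j) (e l))"
    by (rule inner_d_sum_right) simp
  also have "\<dots> = (\<Sum>l<k. if l = j then inner_d d x (e j) else 0)"
    using assms unfolding orthonormal_d_def by (intro sum.cong) (auto simp: inner_d_commute)
  also have "\<dots> = inner_d d x (e j)"
    using assms(2) by simp
  finally show ?thesis by (simp add: inner_d_diff_left inner_d_commute)
qed

lemma orthonormal_d_extend:
  assumes "orthonormal_d d k e" "\<forall>j<k. inner_d d u (e j) = 0" "inner_d d u u = 1"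
  shows "orthonormal_d d (Suc k) (e(k := u))"
  using assms unfolding orthonormal_d_def by (auto simp: less_Suc_eq inner_d_commute)

lemma fourier_expansion_d_extend:
  assumes "fourier_expansion_d d k e x" "inner_d d x u = 0"
  shows "fourier_expansion_d d (Suc k) (e(k := u)) x"
  using assms unfolding fourier_expansion_d_def by (auto intro!: sum.cong)

lemma gram_schmidt_d:
  "\<exists>k e. k \<le> length xs \<and> orthonormal_d d k e \<and> (\<forall>x\<in>set xs. fourier_expansion_d d k e x)"
proof (induction xs)
  case Nil
  show ?case by (rule exI[of _ 0]) (simp add: orthonormal_d_def)
next
  case (Cons x xs)
  then obtain k e where k: "k \<le> length xs" and e: "orthonormal_d d k e"
    and xs: "\<forall>y\<in>set xs. fourier_expansion_d d k e y" by blast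
  define proj where "proj i = (\<Sum>j<k. inner_d d x (e j) * e j i)" for i
  define r where "r i = x i - proj i" for i
  have r_perp: "inner_d d r (e j) = 0" if "j < k" for j
    unfolding r_def proj_def using orthonormal_d_residual_orthogonal[OF e that] .
  have r_perp_xs: "inner_d d y r = 0" if "y \<in> set xs" for y
    using inner_d_fourier_expansion[OF xs[rule_format, OF that], of r] r_perp
    by (simp add: inner_d_commute)
  have "inner_d d proj r = (\<Sum>j<k. inner_d d x (e j) * inner_d d r (e j))"
    unfolding proj_def by (subst inner_d_commute, rule inner_d_sum_right) simp
  then have "inner_d d proj r = 0" using r_perp by simp
  moreover have "x = (\<lambda>i. r i + proj i)" by (simp add: r_def)
  ultimately have x_r: "inner_d d x r = inner_d d r r"
    using inner_d_add_left[of d r proj r] by simp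
  show ?case
  proof (cases "inner_d d r r = 0")
    case True
    then have "fourier_expansion_d d k e x"
      unfolding fourier_expansion_d_def using inner_d_self_eq_0_imp_eq_0[OF True]
      by (simp add: r_def proj_def)
    then show ?thesis using k e xs by (intro exI[of _ k] exI[of _ e]) auto
  next
    case False
    define s where "s = sqrt (inner_d d r r)"
    have s: "s > 0" "s * s = inner_d d r r"
      using False inner_d_self_nonneg[of d r] by (auto simp: s_def)
    define u where "u = (\<lambda>i. r i / s)"
    have u_u: "inner_d d u u = 1"
      using s False by (simp add: u_def inner_d_divide_left inner_d_divide_right)
    have u_perp: "\<forall>j<k. inner_d d u (e j) = 0"
      by (simp add: u_def inner_d_divide_left r_perp)
    have "inner_d d x u = s * s / s"
      using s x_r by (simp add: u_def inner_d_divide_right)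
    then have x_u: "inner_d d x u = s"
      using s(1) by simp
    have "fourier_expansion_d d (Suc k) (e(k := u)) x"
      unfolding fourier_expansion_d_def
    proof (intro allI impI)
      fix i
      have "(\<Sum>j<Suc k. inner_d d x ((e(k := u)) j) * (e(k := u)) j i) = proj i + s * u i"
        unfolding proj_def using x_u by (auto intro!: sum.cong)
      also have "\<dots> = x i" using s by (simp add: u_def r_def)
      finally show "x i = (\<Sum>j<Suc k. inner_d d x ((e(k := u)) j) * (e(k := u)) j i)" ..
    qed
    moreover have "fourier_expansion_d d (Suc k) (e(k := u)) y" if "y \<in> set xs" for y
      using fourier_expansion_d_extend[OF xs[rule_format, OF that]] r_perp_xs[OF that]
      by (simp add: u_def inner_d_divide_right)
    moreover have "Suc k \<le> length (x # xs)" using k by simp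
    ultimately show ?thesis
      using orthonormal_d_extend[OF e u_perp u_u] by (metis set_ConsD)
  qed
qed

lemma inner_d_preserving_map_to_dim_card:
  assumes "finite V"
  shows "\<exists>q. (\<forall>v\<in>V. \<forall>i\<ge>card V. q v i = 0)
    \<and> (\<forall>u\<in>V. \<forall>v\<in>V. inner_d (card V) (q u) (q v) = inner_d d (p u) (p v))"
proof -
  obtain xs where xs: "set xs = V" "distinct xs" using finite_distinct_list[OF assms] by blast
  obtain k e where k: "k \<le> length (map p xs)"
    and exp: "\<forall>x\<in>set (map p xs). fourier_expansion_d d k e x"
    using gram_schmidt_d by blast
  have k_le: "k \<le> card V" using k xs distinct_card by fastforce
  define q where "q v j = (if j < k then inner_d d (p v) (e j) else 0)" for v j
  have "inner_d (card V) (q u) (q v) = inner_d d (p u) (p v)" if "u \<in> V" "v \<in> V" for u v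
  proof -
    have "inner_d (card V) (q u) (q v) = inner_d k (q u) (q v)"
      by (rule inner_d_mono_neutral) (use k_le in \<open>auto simp: q_def\<close>)
    also have "\<dots> = (\<Sum>j<k. inner_d d (p v) (e j) * inner_d d (p u) (e j))"
      unfolding inner_d_def q_def by (intro sum.cong) auto
    also have "\<dots> = inner_d d (p u) (p v)"
      using inner_d_fourier_expansion exp xs that by auto
    finally show ?thesis .
  qed
  moreover have "\<forall>v\<in>V. \<forall>i\<ge>card V. q v i = 0" using k_le by (simp add: q_def)
  ultimately show ?thesis by blast
qed

lemma vector_coloring_in_dim_card:
  assumes "finite V" "vector_coloring V E t d p"
  shows "\<exists>q. vector_coloring V E t (card V) q"
  using inner_d_preserving_map_to_dim_card[OF assms(1), of d p] assms(2)
  unfolding vector_coloring_def by metis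

lemma inner_d_simplex_vertices:
  fixes c :: real
  assumes "a < n" "b < n"
  shows "inner_d n (\<lambda>i. (if i = a then 1 else 0) - c) (\<lambda>i. (if i = b then 1 else 0) - c)
         = (if a = b then 1 else 0) - 2 * c + real n * c * c"
proof -
  have "inner_d n (\<lambda>i. (if i = a then 1 else 0) - c) (\<lambda>i. (if i = b then 1 else 0) - c)
      = (\<Sum>i<n. (if i = a \<and> i = b then 1 else 0) - (if i = a then c else 0) - (if i = b then c else 0) + c * c)"
    unfolding inner_d_def by (intro sum.cong) (auto simp: algebra_simps)
  also have "\<dots> = (if a = b then 1 else 0) - c - c + real n * (c * c)"
    using assms by (simp add: sum.distrib sum_subtractf) (auto intro!: sum.neutral)
  finally show ?thesis by simp
qed

lemma exists_vector_coloring: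
  assumes "graph V E"
  shows "\<exists>t d p. vector_coloring V E t d p"
proof -
  \<comment> \<open>Vertices of a regular simplex with n vertices; the two spare vertices keep n \<ge> 2.\<close>
  define n where "n = card V + 2"
  obtain idx where idx: "bij_betw idx V {..<card V}"
    using assms unfolding graph_def
    by (metis bij_betw_inv ex_bij_betw_nat_finite lessThan_atLeast0)
  then have idx_n: "idx v < n" if "v \<in> V" for v
    using bij_betw_apply[OF idx that] by (simp add: n_def)
  define c :: real where "c = 1 / real n"
  define s :: real where "s = (real n - 1) / real n"
  define p where "p v i = (if i < n then ((if i = idx v then 1 else 0) - c) / sqrt s else 0)" for v i
  have "real n \<ge> 2" by (simp add: n_def)
  then have s_pos: "s > 0" by (simp add: s_def)
  have p_inner: "inner_d n (p u) (p v) = (if u = v then 1 else - 1 / (real n - 1))"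
    if "u \<in> V" "v \<in> V" for u v
  proof -
    have "inner_d n (p u) (p v) = inner_d n (\<lambda>i. (if i = idx u then 1 else 0) - c)
        (\<lambda>i. (if i = idx v then 1 else 0) - c) / s"
      unfolding inner_d_def p_def using s_pos
      by (simp add: sum_divide_distrib real_sqrt_mult[symmetric])
    also have "\<dots> = ((if u = v then 1 else 0) - 2 * c + real n * c * c) / s"
      using inner_d_simplex_vertices[OF idx_n[OF that(1)] idx_n[OF that(2)]]
        inj_on_eq_iff[OF bij_betw_imp_inj_on[OF idx] that] by simp
    also have "\<dots> = (if u = v then 1 else - 1 / (real n - 1))"
      using \<open>real n \<ge> 2\<close> by (auto simp: c_def s_def field_simps)
    finally show ?thesis .
  qed
  have "vector_coloring V E (real n) n p"
    unfolding vector_coloring_def using p_inner assms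
    by (auto simp: p_def n_def graph_def)
  then show ?thesis by blast
qed

lemma vector_coloring_component_bound:
  assumes "vector_coloring V E t d p" "v \<in> V"
  shows "\<bar>p v i\<bar> \<le> 1"
proof (cases "i < d")
  case True
  have "p v i * p v i \<le> (\<Sum>j<d. p v j * p v j)"
    by (rule member_le_sum) (use True in auto)
  also have "\<dots> = 1" using assms unfolding vector_coloring_def inner_d_def by auto
  finally show ?thesis using abs_le_square_iff[of "p v i" 1] by (simp add: power2_eq_square)
next
  case False
  then show ?thesis using assms unfolding vector_coloring_def by auto
qed

lemma bounded_imp_convergent_subseq_finite:
  fixes f :: "nat \<Rightarrow> 'i \<Rightarrow> real"
  assumes "finite S" "\<forall>i\<in>S. bounded (range (\<lambda>n. f n i))"
  shows "\<exists>r. strict_mono r \<and> (\<forall>i\<in>S. convergent (\<lambda>n. f (r n) i))"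
  using assms
proof (induction S rule: finite_induct)
  case empty
  show ?case by (rule exI[of _ id]) (simp add: strict_mono_def)
next
  case (insert i S)
  then obtain r where r: "strict_mono r" "\<forall>j\<in>S. convergent (\<lambda>n. f (r n) j)" by auto
  have "bounded (range (\<lambda>n. f (r n) i))"
    by (rule bounded_subset[of "range (\<lambda>n. f n i)"]) (use insert.prems in auto)
  then obtain l r' where r': "strict_mono r'" "((\<lambda>n. f (r n) i) \<circ> r') \<longlonglongrightarrow> l"
    using bounded_imp_convergent_subsequence by blast
  have "convergent (\<lambda>n. f ((r \<circ> r') n) j)" if "j \<in> insert i S" for j
  proof (cases "j = i")
    case True
    then show ?thesis using r' by (auto simp: convergent_def o_def)
  next
    case False
    then have "convergent ((\<lambda>n. f (r n) j) \<circ> r')"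
      using r r' that convergent_subseq_convergent by auto
    then show ?thesis by (simp add: o_def)
  qed
  moreover have "strict_mono (r \<circ> r')" using r r' by (simp add: strict_mono_o)
  ultimately show ?case by blast
qed

lemma vector_coloring_limit:
  assumes "finite V" "tn \<longlonglongrightarrow> t" "\<And>n. vector_coloring V E (tn n) N (q n)"
  shows "\<exists>p. vector_coloring V E t N p"
proof -
  have t_ge_2: "t \<ge> 2"
    using LIMSEQ_le_const[OF assms(2)] assms(3) unfolding vector_coloring_def by blast
  have "\<forall>x\<in>V \<times> {..<N}. bounded (range (\<lambda>n. q n (fst x) (snd x)))"
    using vector_coloring_component_bound[OF assms(3)] unfolding bounded_real by auto
  then obtain r where r: "strict_mono r"
    and r_conv: "\<forall>x\<in>V \<times> {..<N}. convergent (\<lambda>n. q (r n) (fst x) (snd x))"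
    using bounded_imp_convergent_subseq_finite[of "V \<times> {..<N}" "\<lambda>n x. q n (fst x) (snd x)"]
      assms(1) by blast
  define p where "p v i = (if i < N then lim (\<lambda>n. q (r n) v i) else 0)" for v i
  have "(\<lambda>n. q (r n) v i) \<longlonglongrightarrow> p v i" if "v \<in> V" "i < N" for v i
    using r_conv that unfolding p_def by (auto simp: convergent_LIMSEQ_iff)
  then have inner_lim: "(\<lambda>n. inner_d N (q (r n) u) (q (r n) v)) \<longlonglongrightarrow> inner_d N (p u) (p v)"
    if "u \<in> V" "v \<in> V" for u v
    unfolding inner_d_def by (intro tendsto_sum tendsto_mult) (auto simp: that)
  have "(\<lambda>n. tn (r n)) \<longlonglongrightarrow> t"
    using LIMSEQ_subseq_LIMSEQ[OF assms(2) r] by (simp add: o_def)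
  then have bound_lim: "(\<lambda>n. - 1 / (tn (r n) - 1)) \<longlonglongrightarrow> - 1 / (t - 1)"
    using t_ge_2 by (intro tendsto_intros) auto
  have "vector_coloring V E t N p"
    unfolding vector_coloring_def
  proof (intro conjI ballI allI impI)
    fix v assume v: "v \<in> V"
    have "(\<lambda>n. inner_d N (q (r n) v) (q (r n) v)) = (\<lambda>n. 1)"
      using assms(3) v unfolding vector_coloring_def by auto
    then show "inner_d N (p v) (p v) = 1"
      using inner_lim[OF v v] LIMSEQ_unique tendsto_const by metis
  next
    fix u v assume uv: "u \<in> V" "v \<in> V" "E u v"
    have "\<forall>n. inner_d N (q (r n) u) (q (r n) v) \<le> - 1 / (tn (r n) - 1)"
      using assms(3) uv unfolding vector_coloring_def by auto
    then show "inner_d N (p u) (p v) \<le> - 1 / (t - 1)"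
      using LIMSEQ_le[OF inner_lim[OF uv(1,2)] bound_lim] by auto
  qed (use t_ge_2 in \<open>auto simp: p_def\<close>)
  then show ?thesis by blast
qed

lemma closed_vector_coloring_parameters:
  assumes "finite V"
  shows "closed {t. \<exists>d p. vector_coloring V E t d p}"
  unfolding closed_sequential_limits
proof (intro allI impI, elim conjE)
  fix tn t assume colorable: "\<forall>n. tn n \<in> {t. \<exists>d p. vector_coloring V E t d p}"
    and lim: "tn \<longlonglongrightarrow> t"
  have "\<forall>n. \<exists>q. vector_coloring V E (tn n) (card V) q"
    using colorable vector_coloring_in_dim_card[OF assms] by blast
  then obtain q where "\<And>n. vector_coloring V E (tn n) (card V) (q n)" by metis
  then show "t \<in> {t. \<exists>d p. vector_coloring V E t d p}"
    using vector_coloring_limit[OF assms lim] by blast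
qed

lemma optimal_vector_coloring_exists:
  assumes "graph V E"
  shows "\<exists>d p. optimal_vector_coloring V E d p"
proof -
  let ?T = "{t. \<exists>d p. vector_coloring V E t d p}"
  have "?T \<noteq> {}" using exists_vector_coloring[OF assms] by blast
  moreover have "bdd_below ?T"
    unfolding vector_coloring_def by (rule bdd_belowI[of _ 2]) auto
  moreover have "closed ?T"
    using assms unfolding graph_def by (blast intro: closed_vector_coloring_parameters)
  ultimately have "chi_v V E \<in> ?T"
    unfolding chi_v_def by (rule closed_contains_Inf)
  then show ?thesis unfolding optimal_vector_coloring_def by blast
qed

lemma vector_coloring_comp_graph_hom:
  assumes "vector_coloring VH EH t d q" "graph_hom VG EG VH EH f"
  shows "vector_coloring VG EG t d (q \<circ> f)"
  using assms unfolding vector_coloring_def graph_hom_def by auto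


theorem lemma2p2:
  fixes VG :: "'a set" and EG :: "'a \<Rightarrow> 'a \<Rightarrow> bool"
    and VH :: "'b set" and EH :: "'b \<Rightarrow> 'b \<Rightarrow> bool" and t :: real
  assumes "graph VG EG" and "graph VH EH"
    and "chi_v VG EG = t" and "chi_v VH EH = t"
    and inj: "\<And>d p. optimal_vector_coloring VG EG d p \<Longrightarrow> inj_on p VG"
  shows "(\<forall>f. graph_hom VG EG VH EH f \<longrightarrow> inj_on f VG)
    \<and> ((\<forall>d p. optimal_vector_coloring VG EG d p \<longrightarrow>
            (\<forall>g\<in>VG. \<forall>g'\<in>VG. inner_d d (p g) (p g') \<le> - 1 / (t - 1) \<longleftrightarrow> EG g g'))
         \<longrightarrow> (\<forall>f. graph_hom VG EG VH EH f \<longrightarrow> induced_embedding VG EG VH EH f))"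
proof -
  obtain d q where q: "vector_coloring VH EH t d q"
    using optimal_vector_coloring_exists[OF assms(2)] assms(4)
    unfolding optimal_vector_coloring_def by auto
  have opt: "optimal_vector_coloring VG EG d (q \<circ> f)" if "graph_hom VG EG VH EH f" for f
    using vector_coloring_comp_graph_hom[OF q that] assms(3)
    by (simp add: optimal_vector_coloring_def)
  have hom_inj: "inj_on f VG" if "graph_hom VG EG VH EH f" for f
    using inj[OF opt[OF that]] by (rule inj_on_imageI2)
  show ?thesis
  proof (intro conjI allI impI)
    fix f assume "graph_hom VG EG VH EH f"
    then show "inj_on f VG" by (rule hom_inj)
  next
    fix f assume edges_detected: "\<forall>d p. optimal_vector_coloring VG EG d p \<longrightarrow>
        (\<forall>g\<in>VG. \<forall>g'\<in>VG. inner_d d (p g) (p g') \<le> - 1 / (t - 1) \<longleftrightarrow> EG g g')"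
      and f: "graph_hom VG EG VH EH f"
    have "EG u v" if "u \<in> VG" "v \<in> VG" "EH (f u) (f v)" for u v
    proof -
      have "inner_d d (q (f u)) (q (f v)) \<le> - 1 / (t - 1)"
        using q f that unfolding vector_coloring_def graph_hom_def by blast
      then show ?thesis using edges_detected opt[OF f] that by fastforce
    qed
    then show "induced_embedding VG EG VH EH f"
      using f hom_inj[OF f] unfolding induced_embedding_def graph_hom_def by blast
  qed
qed

end
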